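(* For every integer $n\geq 1$, $$c_n(231,1243 : 231)=c_n(312,2134 : 312)=\begin{cases}\frac{4k^3+3k^2-k}{6}+1 & \text{if } n=2k,\\ \frac{4k^3+9k^2+5k}{6}+1 & \text{if } n=2k+1.\end{cases}$$
   Context: $S_n$ is the symmetric group on $[n]=\{1,\dots,n\}$, and a permutation $\pi\in S_n$ is written in one-line notation $\pi=\pi_1\pi_2\cdots\pi_n$ with $\pi_i=\pi(i)$. For $\tau\in S_k$, $k\le n$, $\pi$ contains $\tau$ if there are indices $i_1<\dots<i_k$ with $\pi_{i_s}>\pi_{i_t}$ iff $\tau_s>\tau_t$ for all $1\le s<t\le k$; otherwise $\pi$ avoids $\tau$. $\pi^2$ denotes the composition $\pi\circ\pi$. For patterns $\sigma_1,\sigma_2,\rho$, $c_n(\sigma_1,\sigma_2 : \rho)$ denotes the number of permutations $\pi\in S_n$ such that $\pi$ avoids both $\sigma_1$ and $\sigma_2$ and $\pi^2$ avoids $\rho$. *)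

theory Defs
  imports "HOL-Combinatorics.Permutations" Complex_Main
begin

text \<open>Permutations of [n] = {1..n} are functions \<pi> with \<pi> permutes {1..n}.
Patterns \<tau> \<in> S_k are given in one-line notation as lists [\<tau>_1,...,\<tau>_k] (0-indexed).\<close>

definition contains_pat :: "nat \<Rightarrow> (nat \<Rightarrow> nat) \<Rightarrow> nat list \<Rightarrow> bool" where
  "contains_pat n \<pi> \<tau> \<longleftrightarrow>
     (\<exists>f :: nat \<Rightarrow> nat.
        (\<forall>s<length \<tau>. 1 \<le> f s \<and> f s \<le> n) \<and>
        (\<forall>s t. s < t \<and> t < length \<tau> \<longrightarrow> f s < f t) \<and>
        (\<forall>s t. s < t \<and> t < length \<tau> \<longrightarrow> (\<pi> (f s) > \<pi> (f t) \<longleftrightarrow> \<tau> ! s > \<tau> ! t)))"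

definition avoids_pat :: "nat \<Rightarrow> (nat \<Rightarrow> nat) \<Rightarrow> nat list \<Rightarrow> bool" where
  "avoids_pat n \<pi> \<tau> \<longleftrightarrow> \<not> contains_pat n \<pi> \<tau>"

definition c_count :: "nat \<Rightarrow> nat list \<Rightarrow> nat list \<Rightarrow> nat list \<Rightarrow> nat" where
  "c_count n \<sigma>1 \<sigma>2 \<rho> = card {\<pi>. \<pi> permutes {1..n} \<and> avoids_pat n \<pi> \<sigma>1 \<and>
       avoids_pat n \<pi> \<sigma>2 \<and> avoids_pat n (\<pi> \<circ> \<pi>) \<rho>}"

end

theory Submission
  imports Defs
begin

(* A permutation avoiding 231 has the form \<alpha> n \<beta> with \<alpha> < \<beta>.  Let \<pi> be in the class with
   \<pi> n \<noteq> n, and let p = \<pi>\<inverse> n and q = \<pi>\<inverse> p.  Applied to \<pi>, this makes \<pi> reverse [1, p)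
   (using 1243 against the entries at p and n); applied to \<pi>\<^sup>2, for which \<pi>\<^sup>2 q = n, it makes \<pi> map
   (q, n] into (p, q), so n + p < 2q, and the remaining 231 conditions pin \<pi> down to a single
   block permutation determined by p and q.  Since the members fixing n form the class for n - 1,
   this gives c_n = c_(n-1) + floor(n^2/4), which sums to the stated cubics.  The second count is
   the same because the reverse-complement, conjugation by i \<mapsto> n + 1 - i, turns 231 and 1243
   into 312 and 2134 and commutes with squaring. *)

section \<open>Occurrences of patterns of length 3 and 4\<close>

lemma all_less_3: "(\<forall>s<3. P s) \<longleftrightarrow> P 0 \<and> P 1 \<and> P (2::nat)"
  by (auto simp: numeral_eq_Suc less_Suc_eq)

lemma all_pairs_less_3:
  "(\<forall>s t. s < t \<and> t < 3 \<longrightarrow> P s t) \<longleftrightarrow> P 0 1 \<and> P 0 2 \<and> P 1 (2::nat)"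
  by (auto simp: numeral_eq_Suc less_Suc_eq)

lemma all_less_4: "(\<forall>s<4. P s) \<longleftrightarrow> P 0 \<and> P 1 \<and> P 2 \<and> P (3::nat)"
  by (auto simp: numeral_eq_Suc less_Suc_eq)

lemma all_pairs_less_4:
  "(\<forall>s t. s < t \<and> t < 4 \<longrightarrow> P s t) \<longleftrightarrow> P 0 1 \<and> P 0 2 \<and> P 0 3 \<and> P 1 2 \<and> P 1 3 \<and> P 2 (3::nat)"
  by (auto simp: numeral_eq_Suc less_Suc_eq)

lemma ex_nat_fun_3: "(\<exists>f :: nat \<Rightarrow> 'a. P (f 0) (f 1) (f 2)) \<longleftrightarrow> (\<exists>x y z. P x y z)"
proof
  assume "\<exists>x y z. P x y z"
  then obtain x y z where "P x y z" by blast
  then show "\<exists>f :: nat \<Rightarrow> 'a. P (f 0) (f 1) (f 2)"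
    by (intro exI[of _ "(!) [x, y, z]"]) (simp add: numeral_2_eq_2)
qed blast

lemma ex_nat_fun_4: "(\<exists>f :: nat \<Rightarrow> 'a. P (f 0) (f 1) (f 2) (f 3)) \<longleftrightarrow> (\<exists>w x y z. P w x y z)"
proof
  assume "\<exists>w x y z. P w x y z"
  then obtain w x y z where "P w x y z" by blast
  then show "\<exists>f :: nat \<Rightarrow> 'a. P (f 0) (f 1) (f 2) (f 3)"
    by (intro exI[of _ "(!) [w, x, y, z]"]) (simp add: numeral_2_eq_2 numeral_3_eq_3)
qed blast

lemma contains_pat_length3:
  "contains_pat n \<pi> [a, b, c] \<longleftrightarrow>
     (\<exists>x y z. 1 \<le> x \<and> x < y \<and> y < z \<and> z \<le> n \<and>
        (\<pi> y < \<pi> x \<longleftrightarrow> b < a) \<and> (\<pi> z < \<pi> x \<longleftrightarrow> c < a) \<and> (\<pi> z < \<pi> y \<longleftrightarrow> c < b))"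
proof -
  let ?chain = "\<lambda>x y z. 1 \<le> x \<and> x < y \<and> y < z \<and> z \<le> n"
  let ?order = "\<lambda>x y z. (\<pi> y < \<pi> x \<longleftrightarrow> b < a) \<and> (\<pi> z < \<pi> x \<longleftrightarrow> c < a) \<and> (\<pi> z < \<pi> y \<longleftrightarrow> c < b)"
  have length: "length [a, b, c] = 3" by simp
  have "(\<forall>s<3. 1 \<le> f s \<and> f s \<le> n) \<and> (\<forall>s t. s < t \<and> t < 3 \<longrightarrow> f s < f t)
      \<longleftrightarrow> ?chain (f 0) (f 1) (f 2)" for f :: "nat \<Rightarrow> nat"
    unfolding all_less_3 all_pairs_less_3 by auto
  moreover have "(\<forall>s t. s < t \<and> t < 3 \<longrightarrow> (\<pi> (f s) > \<pi> (f t) \<longleftrightarrow> [a, b, c] ! s > [a, b, c] ! t))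
      \<longleftrightarrow> ?order (f 0) (f 1) (f 2)" for f :: "nat \<Rightarrow> nat"
    unfolding all_pairs_less_3 by simp
  ultimately have "contains_pat n \<pi> [a, b, c] \<longleftrightarrow>
      (\<exists>f :: nat \<Rightarrow> nat. ?chain (f 0) (f 1) (f 2) \<and> ?order (f 0) (f 1) (f 2))"
    unfolding contains_pat_def length conj_assoc[symmetric] by presburger
  also have "\<dots> \<longleftrightarrow> (\<exists>x y z. ?chain x y z \<and> ?order x y z)"
    by (rule ex_nat_fun_3)
  finally show ?thesis by simp
qed

lemma contains_pat_length4:
  "contains_pat n \<pi> [a, b, c, d] \<longleftrightarrow>
     (\<exists>w x y z. 1 \<le> w \<and> w < x \<and> x < y \<and> y < z \<and> z \<le> n \<and>
        (\<pi> x < \<pi> w \<longleftrightarrow> b < a) \<and> (\<pi> y < \<pi> w \<longleftrightarrow> c < a) \<and> (\<pi> z < \<pi> w \<longleftrightarrow> d < a) \<and>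
        (\<pi> y < \<pi> x \<longleftrightarrow> c < b) \<and> (\<pi> z < \<pi> x \<longleftrightarrow> d < b) \<and> (\<pi> z < \<pi> y \<longleftrightarrow> d < c))"
proof -
  let ?chain = "\<lambda>w x y z. 1 \<le> w \<and> w < x \<and> x < y \<and> y < z \<and> z \<le> n"
  let ?order = "\<lambda>w x y z. (\<pi> x < \<pi> w \<longleftrightarrow> b < a) \<and> (\<pi> y < \<pi> w \<longleftrightarrow> c < a) \<and>
    (\<pi> z < \<pi> w \<longleftrightarrow> d < a) \<and> (\<pi> y < \<pi> x \<longleftrightarrow> c < b) \<and> (\<pi> z < \<pi> x \<longleftrightarrow> d < b) \<and>
    (\<pi> z < \<pi> y \<longleftrightarrow> d < c)"
  have length: "length [a, b, c, d] = 4" by simp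
  have "(\<forall>s<4. 1 \<le> f s \<and> f s \<le> n) \<and> (\<forall>s t. s < t \<and> t < 4 \<longrightarrow> f s < f t)
      \<longleftrightarrow> ?chain (f 0) (f 1) (f 2) (f 3)" for f :: "nat \<Rightarrow> nat"
    unfolding all_less_4 all_pairs_less_4 by auto
  moreover have "(\<forall>s t. s < t \<and> t < 4 \<longrightarrow> (\<pi> (f s) > \<pi> (f t) \<longleftrightarrow> [a, b, c, d] ! s > [a, b, c, d] ! t))
      \<longleftrightarrow> ?order (f 0) (f 1) (f 2) (f 3)" for f :: "nat \<Rightarrow> nat"
    unfolding all_pairs_less_4 by simp
  ultimately have "contains_pat n \<pi> [a, b, c, d] \<longleftrightarrow>
      (\<exists>f :: nat \<Rightarrow> nat. ?chain (f 0) (f 1) (f 2) (f 3) \<and> ?order (f 0) (f 1) (f 2) (f 3))"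
    unfolding contains_pat_def length conj_assoc[symmetric] by presburger
  also have "\<dots> \<longleftrightarrow> (\<exists>w x y z. ?chain w x y z \<and> ?order w x y z)"
    by (rule ex_nat_fun_4)
  finally show ?thesis by simp
qed

lemma contains_231_iff:
  "contains_pat n \<pi> [2, 3, 1] \<longleftrightarrow>
     (\<exists>x y z. 1 \<le> x \<and> x < y \<and> y < z \<and> z \<le> n \<and> \<pi> x \<le> \<pi> y \<and> \<pi> z < \<pi> x)"
proof -
  have "(\<not> \<pi> y < \<pi> x \<and> \<pi> z < \<pi> x \<and> \<pi> z < \<pi> y) \<longleftrightarrow> \<pi> x \<le> \<pi> y \<and> \<pi> z < \<pi> x" for x y z
    by auto
  then show ?thesis unfolding contains_pat_length3 by simp
qed

lemma contains_1243_iff: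
  "contains_pat n \<pi> [1, 2, 4, 3] \<longleftrightarrow>
     (\<exists>w x y z. 1 \<le> w \<and> w < x \<and> x < y \<and> y < z \<and> z \<le> n \<and>
        \<pi> w \<le> \<pi> x \<and> \<pi> x \<le> \<pi> z \<and> \<pi> z < \<pi> y)"
proof -
  have "(\<not> \<pi> x < \<pi> w \<and> \<not> \<pi> y < \<pi> w \<and> \<not> \<pi> z < \<pi> w \<and> \<not> \<pi> y < \<pi> x \<and> \<not> \<pi> z < \<pi> x \<and> \<pi> z < \<pi> y)
      \<longleftrightarrow> \<pi> w \<le> \<pi> x \<and> \<pi> x \<le> \<pi> z \<and> \<pi> z < \<pi> y" for w x y z
    by auto
  then show ?thesis unfolding contains_pat_length4 by simp
qed

lemma avoids_231D:
  assumes "avoids_pat n \<pi> [2, 3, 1]" "1 \<le> x" "x < y" "y < z" "z \<le> n" "\<pi> z < \<pi> x"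
  shows "\<pi> y < \<pi> x"
  using assms unfolding avoids_pat_def contains_231_iff by (meson not_le)

lemma avoids_1243D:
  assumes "avoids_pat n \<pi> [1, 2, 4, 3]" "1 \<le> w" "w < x" "x < y" "y < z" "z \<le> n"
    "\<pi> x \<le> \<pi> z" "\<pi> z < \<pi> y"
  shows "\<pi> x < \<pi> w"
  using assms unfolding avoids_pat_def contains_1243_iff by (meson not_le)

lemma contains_pat_mono:
  assumes "m \<le> n" and "contains_pat m \<pi> \<tau>"
  shows "contains_pat n \<pi> \<tau>"
proof -
  obtain f where range: "\<forall>s<length \<tau>. 1 \<le> f s \<and> f s \<le> m"
    and rest: "(\<forall>s t. s < t \<and> t < length \<tau> \<longrightarrow> f s < f t) \<and>
      (\<forall>s t. s < t \<and> t < length \<tau> \<longrightarrow> (\<pi> (f s) > \<pi> (f t) \<longleftrightarrow> \<tau> ! s > \<tau> ! t))"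
    using assms(2) unfolding contains_pat_def by blast
  have "\<forall>s<length \<tau>. 1 \<le> f s \<and> f s \<le> n" using range assms(1) by auto
  then show ?thesis unfolding contains_pat_def using rest by blast
qed

section \<open>Reverse-complement symmetry\<close>

definition pattern_class :: "nat \<Rightarrow> nat list \<Rightarrow> nat list \<Rightarrow> nat list \<Rightarrow> (nat \<Rightarrow> nat) set" where
  "pattern_class n \<sigma>1 \<sigma>2 \<rho> = {\<pi>. \<pi> permutes {1..n} \<and> avoids_pat n \<pi> \<sigma>1 \<and>
       avoids_pat n \<pi> \<sigma>2 \<and> avoids_pat n (\<pi> \<circ> \<pi>) \<rho>}"

lemma c_count_eq_card: "c_count n \<sigma>1 \<sigma>2 \<rho> = card (pattern_class n \<sigma>1 \<sigma>2 \<rho>)"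
  unfolding c_count_def pattern_class_def ..

lemma finite_pattern_class: "finite (pattern_class n \<sigma>1 \<sigma>2 \<rho>)"
  unfolding pattern_class_def
  by (rule finite_subset[OF _ finite_permutations[of "{1..n}"]]) auto

(* Conjugating a permutation of [n] by reversal n gives its reverse-complement. *)
definition reversal :: "nat \<Rightarrow> nat \<Rightarrow> nat" where
  "reversal n i = (if i \<in> {1..n} then Suc n - i else i)"

definition reverse_complement :: "nat list \<Rightarrow> nat list" where
  "reverse_complement \<tau> = map (\<lambda>x. Suc (length \<tau>) - x) (rev \<tau>)"

lemma reversal_reversal [simp]: "reversal n (reversal n i) = i"
  unfolding reversal_def by auto

lemma reversal_permutes: "reversal n permutes {1..n}"
proof (rule bij_imp_permutes)
  show "bij_betw (reversal n) {1..n} {1..n}"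
    by (rule bij_betw_byWitness[where f' = "reversal n"]) (auto simp: reversal_def)
qed (auto simp: reversal_def)

lemma reverse_complement_reverse_complement:
  assumes "set \<tau> \<subseteq> {1..length \<tau>}"
  shows "reverse_complement (reverse_complement \<tau>) = \<tau>"
  using assms unfolding reverse_complement_def by (auto simp: rev_map[symmetric] intro!: map_idI)

lemma reverse_complement_range:
  assumes "set \<tau> \<subseteq> {1..length \<tau>}"
  shows "set (reverse_complement \<tau>) \<subseteq> {1..length (reverse_complement \<tau>)}"
  using assms unfolding reverse_complement_def by fastforce

lemma length_reverse_complement [simp]: "length (reverse_complement \<tau>) = length \<tau>"
  unfolding reverse_complement_def by simp

lemma nth_reverse_complement:
  "s < length \<tau> \<Longrightarrow> reverse_complement \<tau> ! s = Suc (length \<tau>) - \<tau> ! (length \<tau> - Suc s)"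
  unfolding reverse_complement_def by (simp add: rev_nth)

lemma contains_pat_reverse_complement:
  assumes range: "\<pi> ` {1..n} \<subseteq> {1..n}" and bounded: "set \<tau> \<subseteq> {1..length \<tau>}"
    and "contains_pat n \<pi> \<tau>"
  shows "contains_pat n (reversal n \<circ> \<pi> \<circ> reversal n) (reverse_complement \<tau>)"
proof -
  define k where "k = length \<tau>"
  obtain f where f_range: "\<forall>s<k. 1 \<le> f s \<and> f s \<le> n"
    and f_mono: "\<forall>s t. s < t \<and> t < k \<longrightarrow> f s < f t"
    and f_order: "\<forall>s t. s < t \<and> t < k \<longrightarrow> (\<pi> (f s) > \<pi> (f t) \<longleftrightarrow> \<tau> ! s > \<tau> ! t)"
    using assms(3) unfolding contains_pat_def k_def by blast
  define g where "g s = Suc n - f (k - Suc s)" for s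
  have g_range: "1 \<le> g s \<and> g s \<le> n" if "s < k" for s
    using f_range[rule_format, of "k - Suc s"] that unfolding g_def by auto
  have g_mono: "g s < g t" if "s < t" "t < k" for s t
  proof -
    have "f (k - Suc t) < f (k - Suc s)" using f_mono that by auto
    then show ?thesis using f_range[rule_format, of "k - Suc s"] that unfolding g_def by auto
  qed
  have \<pi>f_range: "1 \<le> \<pi> (f (k - Suc s)) \<and> \<pi> (f (k - Suc s)) \<le> n" if "s < k" for s
    using f_range[rule_format, of "k - Suc s"] range that by (auto simp: image_subset_iff)
  have g_value: "reversal n (\<pi> (reversal n (g s))) = Suc n - \<pi> (f (k - Suc s))" if "s < k" for s
    using f_range[rule_format, of "k - Suc s"] \<pi>f_range[of s] that
    unfolding g_def reversal_def by auto
  have pattern_value: "reverse_complement \<tau> ! s = Suc k - \<tau> ! (k - Suc s)" if "s < k" for s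
    using nth_reverse_complement that unfolding k_def by simp
  have \<tau>_bound: "\<tau> ! i \<le> k" if "i < k" for i
    using subsetD[OF bounded nth_mem[of i \<tau>]] that unfolding k_def by auto
  have g_order: "(reversal n \<circ> \<pi> \<circ> reversal n) (g s) > (reversal n \<circ> \<pi> \<circ> reversal n) (g t)
      \<longleftrightarrow> reverse_complement \<tau> ! s > reverse_complement \<tau> ! t" if "s < t" "t < k" for s t
  proof -
    have "\<pi> (f (k - Suc s)) \<le> n" "\<pi> (f (k - Suc t)) \<le> n"
      using \<pi>f_range that by auto
    moreover have "\<tau> ! (k - Suc s) \<le> k" "\<tau> ! (k - Suc t) \<le> k"
      using \<tau>_bound that by auto
    moreover have "\<pi> (f (k - Suc t)) > \<pi> (f (k - Suc s)) \<longleftrightarrow> \<tau> ! (k - Suc t) > \<tau> ! (k - Suc s)"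
      using f_order that by (simp add: diff_less_mono2)
    moreover have "Suc m - a < Suc m - b \<longleftrightarrow> b < a" if "a \<le> m" "b \<le> m" for m a b :: nat
      using that by auto
    ultimately show ?thesis using that by (simp add: g_value pattern_value)
  qed
  show ?thesis
    unfolding contains_pat_def length_reverse_complement k_def[symmetric]
    using g_range g_mono g_order by blast
qed

lemma reversal_conj_conj [simp]: "reversal n \<circ> (reversal n \<circ> \<pi> \<circ> reversal n) \<circ> reversal n = \<pi>"
  by (simp add: fun_eq_iff)

lemma reversal_conj_permutes_iff:
  "reversal n \<circ> \<pi> \<circ> reversal n permutes {1..n} \<longleftrightarrow> \<pi> permutes {1..n}"
  by (metis permutes_compose reversal_conj_conj reversal_permutes)

lemma contains_pat_reverse_complement_iff:
  assumes perm: "\<pi> permutes {1..n}" and range: "set \<tau> \<subseteq> {1..length \<tau>}"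
  shows "contains_pat n (reversal n \<circ> \<pi> \<circ> reversal n) (reverse_complement \<tau>) \<longleftrightarrow> contains_pat n \<pi> \<tau>"
proof
  have "(reversal n \<circ> \<pi> \<circ> reversal n) ` {1..n} \<subseteq> {1..n}"
    using perm reversal_conj_permutes_iff permutes_image by blast
  moreover assume "contains_pat n (reversal n \<circ> \<pi> \<circ> reversal n) (reverse_complement \<tau>)"
  ultimately have "contains_pat n (reversal n \<circ> (reversal n \<circ> \<pi> \<circ> reversal n) \<circ> reversal n)
      (reverse_complement (reverse_complement \<tau>))"
    by (rule contains_pat_reverse_complement[OF _ reverse_complement_range[OF range]])
  then show "contains_pat n \<pi> \<tau>"
    by (simp only: reversal_conj_conj reverse_complement_reverse_complement[OF range])
next
  assume "contains_pat n \<pi> \<tau>"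
  then show "contains_pat n (reversal n \<circ> \<pi> \<circ> reversal n) (reverse_complement \<tau>)"
    using contains_pat_reverse_complement[OF _ range] permutes_image[OF perm] by blast
qed

lemma c_count_reverse_complement:
  assumes "set \<sigma>1 \<subseteq> {1..length \<sigma>1}" "set \<sigma>2 \<subseteq> {1..length \<sigma>2}" "set \<rho> \<subseteq> {1..length \<rho>}"
  shows "c_count n (reverse_complement \<sigma>1) (reverse_complement \<sigma>2) (reverse_complement \<rho>)
    = c_count n \<sigma>1 \<sigma>2 \<rho>"
proof -
  let ?conj = "\<lambda>\<pi>. reversal n \<circ> \<pi> \<circ> reversal n"
  have "?conj \<pi> \<in>
      pattern_class n (reverse_complement \<sigma>1) (reverse_complement \<sigma>2) (reverse_complement \<rho>)
      \<longleftrightarrow> \<pi> \<in> pattern_class n \<sigma>1 \<sigma>2 \<rho>" for \<pi>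
  proof (cases "\<pi> permutes {1..n}")
    case True
    have "?conj \<pi> \<circ> ?conj \<pi> = ?conj (\<pi> \<circ> \<pi>)" by (simp add: fun_eq_iff)
    then show ?thesis
      unfolding pattern_class_def avoids_pat_def
      using True reversal_conj_permutes_iff[of n \<pi>]
        contains_pat_reverse_complement_iff[OF True assms(1)]
        contains_pat_reverse_complement_iff[OF True assms(2)]
        contains_pat_reverse_complement_iff[OF permutes_compose[OF True True] assms(3)]
      by simp
  next
    case False
    then show ?thesis unfolding pattern_class_def using reversal_conj_permutes_iff by blast
  qed
  then have "pattern_class n (reverse_complement \<sigma>1) (reverse_complement \<sigma>2) (reverse_complement \<rho>)
      = ?conj ` pattern_class n \<sigma>1 \<sigma>2 \<rho>"
    by (auto simp: image_iff) (metis reversal_conj_conj)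
  moreover have "inj ?conj" by (rule inj_on_inverseI[where g = ?conj]) simp
  ultimately show ?thesis
    unfolding c_count_eq_card by (simp add: card_image inj_on_subset)
qed

section \<open>Members of the class that move n\<close>

lemma avoids_231_image_before_max:
  assumes perm: "\<pi> permutes {1..n}" and avoids: "avoids_pat n \<pi> [2, 3, 1]"
    and q: "q \<in> {1..n}" "\<pi> q = n"
  shows "\<pi> ` {1..<q} = {1..<q}"
proof (rule endo_inj_surj)
  show "\<pi> ` {1..<q} \<subseteq> {1..<q}"
  proof
    fix v assume "v \<in> \<pi> ` {1..<q}"
    then obtain x where x: "1 \<le> x" "x < q" "v = \<pi> x" by auto
    have "\<pi> x < \<pi> z" if "q < z" "z \<le> n" for z
    proof (rule ccontr)
      assume "\<not> \<pi> x < \<pi> z"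
      moreover have "\<pi> z \<noteq> \<pi> x"
        using permutes_inj[OF perm] x that by (metis injD less_trans not_less_iff_gr_or_eq)
      ultimately have "\<pi> q < \<pi> x" using avoids_231D[OF avoids x(1,2) that] by simp
      then show False using permutes_in_image[OF perm, of x] x q by auto
    qed
    moreover have "\<pi> z \<noteq> n" if "q < z" for z
      using permutes_inj[OF perm] q that by (metis injD less_irrefl)
    moreover have "\<pi> z \<le> n" if "q < z" "z \<le> n" for z
      using permutes_in_image[OF perm, of z] q that by simp
    ultimately have "\<pi> ` {q<..n} \<subseteq> {\<pi> x<..<n}"
      by (simp add: image_subset_iff le_neq_implies_less)
    then have "card (\<pi> ` {q<..n}) \<le> card {\<pi> x<..<n}"
      by (rule card_mono[rotated]) simp
    then have "n - q \<le> n - Suc (\<pi> x)"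
      by (simp add: card_image[OF permutes_inj_on[OF perm]])
    moreover have "\<pi> x \<in> {1..n}" using permutes_in_image[OF perm, of x] x q by auto
    moreover have "\<pi> x \<noteq> n" using permutes_inj[OF perm] x q by (metis injD less_irrefl)
    ultimately show "v \<in> {1..<q}" using x q by auto
  qed
qed (use permutes_inj_on[OF perm] in auto)

lemma avoids_231_before_max_iff:
  assumes perm: "\<pi> permutes {1..n}" and avoids: "avoids_pat n \<pi> [2, 3, 1]"
    and q: "q \<in> {1..n}" "\<pi> q = n" and y: "y \<in> {1..n}"
  shows "\<pi> y < q \<longleftrightarrow> y < q"
proof -
  have "\<pi> y \<in> \<pi> ` {1..<q} \<longleftrightarrow> y \<in> {1..<q}"
    using inj_image_mem_iff[OF permutes_inj[OF perm]] .
  then show ?thesis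
    using avoids_231_image_before_max[OF perm avoids q] permutes_in_image[OF perm, of y] y by auto
qed

lemma strict_decreasing_interval_eq:
  fixes f :: "nat \<Rightarrow> nat"
  assumes dec: "\<And>x y. lo \<le> x \<Longrightarrow> x < y \<Longrightarrow> y \<le> hi \<Longrightarrow> f y < f x"
    and range: "\<And>x. lo \<le> x \<Longrightarrow> x \<le> hi \<Longrightarrow> lo' \<le> f x \<and> f x \<le> hi'"
    and length: "lo' + hi = hi' + lo"
    and x: "lo \<le> x" "x \<le> hi"
  shows "f x + x = hi' + lo"
proof -
  have drop: "f (y + d) + d \<le> f y" if "lo \<le> y" "y + d \<le> hi" for y d
    using that
  proof (induction d)
    case (Suc d)
    then show ?case using dec[of "y + d" "y + Suc d"] by simp
  qed simp
  have "f hi + (hi - x) \<le> f x" using drop[of x "hi - x"] x by simp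
  moreover have "f x + (x - lo) \<le> f lo" using drop[of lo "x - lo"] x by simp
  moreover have "lo' \<le> f hi" "f lo \<le> hi'" using range x by auto
  ultimately show ?thesis using x length by linarith
qed

lemma strict_increasing_interval_eq:
  fixes f :: "nat \<Rightarrow> nat"
  assumes inc: "\<And>x y. lo \<le> x \<Longrightarrow> x < y \<Longrightarrow> y \<le> hi \<Longrightarrow> f x < f y"
    and range: "\<And>x. lo \<le> x \<Longrightarrow> x \<le> hi \<Longrightarrow> lo' \<le> f x \<and> f x \<le> hi'"
    and length: "lo' + hi = hi' + lo"
    and x: "lo \<le> x" "x \<le> hi"
  shows "f x + lo = x + lo'"
proof -
  have "f (lo + hi - (lo + hi - x)) + (lo + hi - x) = hi' + lo"
    by (rule strict_decreasing_interval_eq[of lo hi "\<lambda>y. f (lo + hi - y)" lo' hi' "lo + hi - x"])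
      (use inc range length x in auto)
  then show ?thesis using x length by simp
qed

definition block_perm :: "nat \<Rightarrow> nat \<Rightarrow> nat \<Rightarrow> nat \<Rightarrow> nat" where
  "block_perm n p q i =
     (if i \<notin> {1..n} then i else if i < p then p - i else if i < q then n + p - i else i + p - q)"

definition block_params :: "nat \<Rightarrow> (nat \<times> nat) set" where
  "block_params n = {(p, q). 1 \<le> p \<and> p < q \<and> q \<le> n \<and> n + p + 1 \<le> 2 * q}"

lemma finite_block_params: "finite (block_params n)"
  by (rule finite_subset[of _ "{0..n} \<times> {0..n}"]) (auto simp: block_params_def)

locale avoider_moving_last =
  fixes n :: nat and \<pi> :: "nat \<Rightarrow> nat"
  assumes permutes: "\<pi> permutes {1..n}"
    and avoids_231: "avoids_pat n \<pi> [2, 3, 1]"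
    and avoids_1243: "avoids_pat n \<pi> [1, 2, 4, 3]"
    and square_avoids_231: "avoids_pat n (\<pi> \<circ> \<pi>) [2, 3, 1]"
    and moves_last: "\<pi> n \<noteq> n"
begin

lemma maps_into: "x \<in> {1..n} \<Longrightarrow> \<pi> x \<in> {1..n}"
  using permutes_in_image[OF permutes] by blast

lemma inj_eq: "\<pi> x = \<pi> y \<longleftrightarrow> x = y"
  using permutes_inj[OF permutes] by (auto dest: injD)

lemma surj_onto: "v \<in> {1..n} \<Longrightarrow> \<exists>x\<in>{1..n}. \<pi> x = v"
  using permutes_image[OF permutes] by (metis imageE)

lemma n_pos: "1 \<le> n"
  using permutes_not_in[OF permutes, of 0] moves_last by (cases n) auto

definition p where "p = inv \<pi> n"
definition q where "q = inv \<pi> p"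

lemma p_range: "p \<in> {1..n}" and \<pi>_p: "\<pi> p = n"
  using permutes_in_image[OF permutes_inv[OF permutes], of n] permutes_inverses(1)[OF permutes]
    n_pos
  unfolding p_def by auto

lemma p_less_n: "p < n"
  using p_range \<pi>_p moves_last by (cases "p = n") auto

lemma below_p_iff: "y \<in> {1..n} \<Longrightarrow> \<pi> y < p \<longleftrightarrow> y < p"
  by (rule avoids_231_before_max_iff[OF permutes avoids_231 p_range \<pi>_p])

lemma decreasing_below_p: "1 \<le> i \<Longrightarrow> i < j \<Longrightarrow> j < p \<Longrightarrow> \<pi> j < \<pi> i"
proof -
  assume ij: "1 \<le> i" "i < j" "j < p"
  have "\<pi> j < p" "p \<le> \<pi> n" "\<pi> n \<le> n"
    using below_p_iff[of j] below_p_iff[of n] maps_into[of n] ij p_less_n n_pos by auto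
  then show "\<pi> j < \<pi> i"
    using avoids_1243D[OF avoids_1243 ij p_less_n order_refl] \<pi>_p moves_last by simp
qed

lemma \<pi>_below_p: "1 \<le> i \<Longrightarrow> i < p \<Longrightarrow> \<pi> i = p - i"
proof -
  assume i: "1 \<le> i" "i < p"
  have "\<pi> i + i = (p - 1) + 1"
  proof (rule strict_decreasing_interval_eq[of 1 "p - 1" \<pi> 1 "p - 1"])
    show "\<pi> y < \<pi> x" if "1 \<le> x" "x < y" "y \<le> p - 1" for x y
      using decreasing_below_p that by simp
    show "1 \<le> \<pi> x \<and> \<pi> x \<le> p - 1" if "1 \<le> x" "x \<le> p - 1" for x
    proof -
      have "x \<in> {1..n}" using that p_range by auto
      then show ?thesis using below_p_iff[of x] maps_into[of x] that by auto
    qed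
  qed (use i in auto)
  then show "\<pi> i = p - i" using i by simp
qed

lemma q_range: "q \<in> {1..n}" and \<pi>_q: "\<pi> q = p"
  using permutes_in_image[OF permutes_inv[OF permutes], of p] permutes_inverses(1)[OF permutes]
    p_range
  unfolding q_def by auto

lemma p_less_q: "p < q"
proof -
  have "q \<noteq> p" using \<pi>_q \<pi>_p p_less_n by auto
  moreover have "\<not> q < p" using below_p_iff[OF q_range] \<pi>_q by simp
  ultimately show ?thesis by simp
qed

lemma above_p: "p < y \<Longrightarrow> y \<le> n \<Longrightarrow> y \<noteq> q \<Longrightarrow> p < \<pi> y"
  using below_p_iff[of y] p_range inj_eq[of y q] \<pi>_q by fastforce

lemma decreasing_between: "p < x \<Longrightarrow> x < y \<Longrightarrow> y < q \<Longrightarrow> \<pi> y < \<pi> x"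
  using avoids_231D[OF avoids_231, of x y q] above_p[of x] p_range q_range \<pi>_q by simp

lemma square_below_q_iff: "y \<in> {1..n} \<Longrightarrow> \<pi> (\<pi> y) < q \<longleftrightarrow> y < q"
  using avoids_231_before_max_iff[OF permutes_compose[OF permutes permutes] square_avoids_231
      q_range]
  by (simp add: \<pi>_q \<pi>_p)

lemma last_below_q: "\<pi> n < q"
  using square_below_q_iff[OF p_range] p_less_q \<pi>_p by simp

lemma after_q_not_q: "q < y \<Longrightarrow> y \<le> n \<Longrightarrow> \<pi> y \<noteq> q"
  using square_below_q_iff[of y] \<pi>_q p_less_q q_range by auto

(* Otherwise take w > q with the least value \<pi> w > q: the entry of value \<pi> w - 1 lies strictly
   between p and q, and together with w and n it forms a 231. *)
lemma after_q_below_q: "q < y \<Longrightarrow> y \<le> n \<Longrightarrow> \<pi> y < q"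
proof (rule ccontr)
  assume y: "q < y" "y \<le> n" and "\<not> \<pi> y < q"
  then have "q < \<pi> y" using after_q_not_q by fastforce
  then obtain w where w: "q < w" "w \<le> n" "q < \<pi> w"
    and w_min: "\<And>y. q < y \<Longrightarrow> y \<le> n \<Longrightarrow> q < \<pi> y \<Longrightarrow> \<pi> w \<le> \<pi> y"
    using ex_has_least_nat[of "\<lambda>y. q < y \<and> y \<le> n \<and> q < \<pi> y" y \<pi>] y by blast
  have "\<pi> w \<le> n" using maps_into[of w] w q_range by auto
  then have "\<pi> w - 1 \<in> {1..n}" using w q_range by auto
  then obtain x where x: "x \<in> {1..n}" "\<pi> x = \<pi> w - 1" using surj_onto by blast
  have "p < x"
    using below_p_iff[OF x(1)] \<pi>_p p_less_q x w \<open>\<pi> w \<le> n\<close> by (cases "x = p") auto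
  moreover have "x < q"
  proof -
    have "x \<noteq> q" using x \<pi>_q p_less_q w by auto
    moreover have "\<not> q < x"
    proof
      assume "q < x"
      then have "\<pi> x \<noteq> q" using after_q_not_q[of x] x by auto
      moreover have "q \<le> \<pi> x" using x w by auto
      ultimately have "\<pi> w \<le> \<pi> x" using w_min[of x] \<open>q < x\<close> x by auto
      then show False using x w by auto
    qed
    ultimately show ?thesis by simp
  qed
  moreover have "w < n" using last_below_q w by (cases "w = n") auto
  ultimately have "\<pi> w < \<pi> x"
    using avoids_231D[OF avoids_231, of x w n] last_below_q x w by simp
  then show False using x by simp
qed

lemma after_q_between: "q < y \<Longrightarrow> y \<le> n \<Longrightarrow> p < \<pi> y \<and> \<pi> y < q"
  using above_p[of y] after_q_below_q[of y] p_less_q by simp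

lemma card_after_q_image: "card (\<pi> ` {q<..n}) = n - q"
  using card_image[OF permutes_inj_on[OF permutes]] by simp

lemma after_q_fits: "n + p + 1 \<le> 2 * q"
proof -
  have "\<pi> ` {q<..n} \<subseteq> {p<..<q}" using after_q_between by auto
  then have "card (\<pi> ` {q<..n}) \<le> card {p<..<q}" by (rule card_mono[rotated]) simp
  then show ?thesis using card_after_q_image q_range p_less_q by simp
qed

lemma after_q_le: "q < y \<Longrightarrow> y \<le> n \<Longrightarrow> \<pi> y \<le> p + (n - q)"
proof (rule ccontr)
  assume y: "q < y" "y \<le> n" and "\<not> \<pi> y \<le> p + (n - q)"
  define x where "x = \<pi> y"
  have x: "p + (n - q) < x" "x < q" using after_q_between[OF y] \<open>\<not> \<pi> y \<le> p + (n - q)\<close>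
    unfolding x_def by auto
  have "q \<le> \<pi> x" using square_below_q_iff[of y] y q_range unfolding x_def by auto
  have "\<pi> ` {p<..x} \<subseteq> {q..<n}"
  proof (rule image_subsetI)
    fix x' assume x': "x' \<in> {p<..x}"
    have "\<pi> x \<le> \<pi> x'" using decreasing_between[of x' x] x' x by (cases "x' = x") auto
    moreover have "\<pi> x' \<noteq> n" using inj_eq[of x' p] \<pi>_p x' by auto
    moreover have "\<pi> x' \<le> n" using maps_into[of x'] x' x q_range p_range by auto
    ultimately show "\<pi> x' \<in> {q..<n}" using \<open>q \<le> \<pi> x\<close> by auto
  qed
  then have "card (\<pi> ` {p<..x}) \<le> card {q..<n}" by (rule card_mono[rotated]) simp
  then show False using card_image[OF permutes_inj_on[OF permutes]] x by simp
qed

lemma after_q_image: "\<pi> ` {q<..n} = {p<..p + (n - q)}"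
proof (rule card_subset_eq)
  show "\<pi> ` {q<..n} \<subseteq> {p<..p + (n - q)}" using after_q_between after_q_le by auto
  show "card (\<pi> ` {q<..n}) = card {p<..p + (n - q)}" using card_after_q_image by simp
qed simp

lemma between_range: "p < x \<Longrightarrow> x < q \<Longrightarrow> p + (n - q) < \<pi> x \<and> \<pi> x < n"
proof -
  assume x: "p < x" "x < q"
  have "\<pi> x \<notin> \<pi> ` {q<..n}" using inj_eq x by auto
  then have "\<not> \<pi> x \<le> p + (n - q)" using after_q_image above_p[of x] x q_range by auto
  moreover have "\<pi> x \<le> n" "\<pi> x \<noteq> n"
    using maps_into[of x] inj_eq[of x p] \<pi>_p x p_range q_range by auto
  ultimately show ?thesis by simp
qed

lemma \<pi>_between: "p < x \<Longrightarrow> x < q \<Longrightarrow> \<pi> x = n + p - x"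
proof -
  assume x: "p < x" "x < q"
  have "\<pi> x + x = (n - 1) + (p + 1)"
  proof (rule strict_decreasing_interval_eq[of "p + 1" "q - 1" \<pi> "p + (n - q) + 1" "n - 1"])
    show "\<pi> z < \<pi> y" if "p + 1 \<le> y" "y < z" "z \<le> q - 1" for y z
      using decreasing_between that by simp
    show "p + (n - q) + 1 \<le> \<pi> y \<and> \<pi> y \<le> n - 1" if "p + 1 \<le> y" "y \<le> q - 1" for y
    proof -
      have "p < y" "y < q" using that p_less_q by auto
      then show ?thesis using between_range[of y] by auto
    qed
  qed (use x q_range p_less_q in auto)
  then show ?thesis using x by simp
qed

lemma \<pi>_mirror: "q \<le> y \<Longrightarrow> y \<le> n \<Longrightarrow> \<pi> (p + n - y) = y"
  using \<pi>_between[of "p + n - y"] after_q_fits \<pi>_p p_less_q by (cases "y = n") auto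

(* \<pi>\<^sup>2 maps p + n - y to \<pi> y, so a descent of \<pi> after q is a 231 of \<pi>\<^sup>2 ending at p + n - q. *)
lemma increasing_after_q: "q < y \<Longrightarrow> y < y' \<Longrightarrow> y' \<le> n \<Longrightarrow> \<pi> y < \<pi> y'"
proof -
  assume y: "q < y" "y < y'" "y' \<le> n"
  have "1 \<le> p + n - y'" "p + n - y' < p + n - y" "p + n - y < p + n - q" "p + n - q \<le> n"
    using y p_range p_less_q by auto
  moreover have "\<pi> (\<pi> (p + n - q)) < \<pi> (\<pi> (p + n - y'))"
    using \<pi>_mirror[of q] \<pi>_mirror[of y'] \<pi>_q after_q_between[of y'] y q_range by simp
  ultimately have "\<pi> (\<pi> (p + n - y)) < \<pi> (\<pi> (p + n - y'))"
    using avoids_231D[OF square_avoids_231, of "p + n - y'" "p + n - y" "p + n - q"] by simp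
  then show ?thesis using \<pi>_mirror[of y] \<pi>_mirror[of y'] y by simp
qed

lemma \<pi>_after_q: "q < y \<Longrightarrow> y \<le> n \<Longrightarrow> \<pi> y = y + p - q"
proof -
  assume y: "q < y" "y \<le> n"
  have "\<pi> y + (q + 1) = y + (p + 1)"
  proof (rule strict_increasing_interval_eq[of "q + 1" n \<pi> "p + 1" "p + (n - q)"])
    show "\<pi> x < \<pi> z" if "q + 1 \<le> x" "x < z" "z \<le> n" for x z
      using increasing_after_q that by simp
    show "p + 1 \<le> \<pi> x \<and> \<pi> x \<le> p + (n - q)" if "q + 1 \<le> x" "x \<le> n" for x
      using after_q_between[of x] after_q_le[of x] that by auto
  qed (use y q_range in auto)
  then show ?thesis using y by simp
qed

lemma eq_block_perm: "\<pi> = block_perm n p q"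
proof
  fix i
  consider "i \<notin> {1..n}" | "i \<in> {1..n}" "i < p" | "i = p" | "p < i" "i < q" | "i = q"
    | "q < i" "i \<le> n"
    by force
  then show "\<pi> i = block_perm n p q i"
  proof cases
    case 1
    then show ?thesis using permutes_not_in[OF permutes] by (simp add: block_perm_def)
  next
    case 2
    then show ?thesis using \<pi>_below_p by (simp add: block_perm_def)
  next
    case 3
    then show ?thesis using \<pi>_p p_range p_less_q by (simp add: block_perm_def)
  next
    case 4
    then show ?thesis using \<pi>_between p_range q_range by (simp add: block_perm_def)
  next
    case 5
    then show ?thesis using \<pi>_q q_range p_less_q by (simp add: block_perm_def)
  next
    case 6
    then show ?thesis using \<pi>_after_q p_less_q by (simp add: block_perm_def)
  qed
qed

lemma in_block_perm_image: "\<pi> \<in> (\<lambda>(p, q). block_perm n p q) ` block_params n"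
proof (rule rev_image_eqI)
  show "(p, q) \<in> block_params n"
    using p_range p_less_q q_range after_q_fits unfolding block_params_def by simp
qed (simp add: eq_block_perm[symmetric])

end

context
  fixes n p q :: nat
  assumes params: "(p, q) \<in> block_params n"
begin

lemma block_perm_permutes: "block_perm n p q permutes {1..n}"
proof (rule bij_imp_permutes)
  have "inj_on (block_perm n p q) {1..n}"
    using params unfolding inj_on_def block_perm_def block_params_def by auto
  moreover have "block_perm n p q ` {1..n} \<subseteq> {1..n}"
    using params unfolding block_perm_def block_params_def by auto
  ultimately show "bij_betw (block_perm n p q) {1..n} {1..n}"
    by (simp add: bij_betw_def endo_inj_surj)
qed (simp add: block_perm_def)

lemma block_perm_avoids_231: "avoids_pat n (block_perm n p q) [2, 3, 1]"
  using params unfolding avoids_pat_def contains_231_iff block_perm_def block_params_def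
  by (auto split: if_splits)

lemma block_perm_avoids_1243: "avoids_pat n (block_perm n p q) [1, 2, 4, 3]"
  using params unfolding avoids_pat_def contains_1243_iff block_perm_def block_params_def
  by (auto split: if_splits)

lemma block_perm_square_avoids_231: "avoids_pat n (block_perm n p q \<circ> block_perm n p q) [2, 3, 1]"
proof -
  have square: "(block_perm n p q \<circ> block_perm n p q) i = (if i \<notin> {1..n} then i else if i < p then i
      else if i \<le> p + (n - q) then 2 * p + (n - q) - i else if i < q then i else n + q - i)" for i
  proof -
    consider "i \<notin> {1..n}" | "i \<in> {1..n}" "i < p" | "p \<le> i" "i < q" | "q \<le> i" "i \<le> n"
      by force
    then show ?thesis
      using params by cases (auto simp: block_perm_def block_params_def)
  qed
  show ?thesis
    using params unfolding avoids_pat_def contains_231_iff block_params_def square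
    by (auto split: if_splits)
qed

lemma block_perm_moves_last: "block_perm n p q n \<noteq> n"
  using params unfolding block_perm_def block_params_def by auto

lemma block_perm_at_p: "block_perm n p q p = n"
  using params unfolding block_perm_def block_params_def by auto

lemma block_perm_at_q: "block_perm n p q q = p"
  using params unfolding block_perm_def block_params_def by auto

end

lemma inj_on_block_perm: "inj_on (\<lambda>(p, q). block_perm n p q) (block_params n)"
proof (rule inj_onI, clarify)
  fix p q p' q'
  assume params: "(p, q) \<in> block_params n" "(p', q') \<in> block_params n"
    and eq: "block_perm n p q = block_perm n p' q'"
  note inj = permutes_inj[OF block_perm_permutes[OF params(2)]]
  have "block_perm n p' q' p = block_perm n p' q' p'"
    using block_perm_at_p[OF params(1)] block_perm_at_p[OF params(2)] eq by simp
  then have "p = p'" using inj by (simp add: inj_eq)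
  moreover have "block_perm n p' q' q = block_perm n p' q' q'"
    using block_perm_at_q[OF params(1)] block_perm_at_q[OF params(2)] eq \<open>p = p'\<close> by simp
  then have "q = q'" using inj by (simp add: inj_eq)
  ultimately show "p = p' \<and> q = q'" by simp
qed

lemma contains_pat_Suc_fixed_last:
  assumes top: "\<pi> (Suc m) = Suc m" and below: "\<And>x. x \<in> {1..m} \<Longrightarrow> \<pi> x \<le> m"
    and last: "\<tau> \<noteq> []" "last \<tau> < Max (set \<tau>)"
  shows "contains_pat (Suc m) \<pi> \<tau> \<longleftrightarrow> contains_pat m \<pi> \<tau>"
proof
  define k where "k = length \<tau>"
  assume "contains_pat (Suc m) \<pi> \<tau>"
  then obtain f where range: "\<forall>s<k. 1 \<le> f s \<and> f s \<le> Suc m"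
    and mono: "\<forall>s t. s < t \<and> t < k \<longrightarrow> f s < f t"
    and order: "\<forall>s t. s < t \<and> t < k \<longrightarrow> (\<pi> (f s) > \<pi> (f t) \<longleftrightarrow> \<tau> ! s > \<tau> ! t)"
    unfolding contains_pat_def k_def by blast
  obtain i where i: "i < k" "\<tau> ! i = Max (set \<tau>)"
    using Max_in[of "set \<tau>"] last(1) unfolding k_def by (auto simp: in_set_conv_nth)
  have last_nth: "last \<tau> = \<tau> ! (k - 1)" using last(1) unfolding k_def by (simp add: last_conv_nth)
  then have "i < k - 1" using i last(2) by (cases "i = k - 1") auto
  have "f (k - 1) \<le> m"
  proof (rule ccontr)
    assume "\<not> f (k - 1) \<le> m"
    moreover have "f (k - 1) \<le> Suc m" using range \<open>i < k - 1\<close> by simp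
    ultimately have "f (k - 1) = Suc m" by simp
    moreover have "f i < f (k - 1)" "1 \<le> f i" using mono range i \<open>i < k - 1\<close> by auto
    ultimately have "\<not> \<pi> (f (k - 1)) < \<pi> (f i)" using below[of "f i"] top by simp
    moreover have "\<tau> ! (k - 1) < \<tau> ! i" using i last_nth last(2) by simp
    ultimately show False using order \<open>i < k - 1\<close> by auto
  qed
  have "f s \<le> m" if "s < k" for s
  proof (cases "s = k - 1")
    case False
    then have "f s < f (k - 1)" using mono that by simp
    then show ?thesis using \<open>f (k - 1) \<le> m\<close> by simp
  qed (use \<open>f (k - 1) \<le> m\<close> in simp)
  then have "\<forall>s<k. 1 \<le> f s \<and> f s \<le> m" using range by simp
  then show "contains_pat m \<pi> \<tau>"
    unfolding contains_pat_def k_def[symmetric] using mono order by blast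
qed (rule contains_pat_mono[of m], simp_all)

lemma pattern_class_Suc_fixed_last:
  assumes "\<forall>\<tau>\<in>{\<sigma>1, \<sigma>2, \<rho>}. \<tau> \<noteq> [] \<and> last \<tau> < Max (set \<tau>)"
  shows "{\<pi> \<in> pattern_class (Suc m) \<sigma>1 \<sigma>2 \<rho>. \<pi> (Suc m) = Suc m} = pattern_class m \<sigma>1 \<sigma>2 \<rho>"
proof -
  have "\<pi> \<in> pattern_class (Suc m) \<sigma>1 \<sigma>2 \<rho> \<and> \<pi> (Suc m) = Suc m \<longleftrightarrow> \<pi> \<in> pattern_class m \<sigma>1 \<sigma>2 \<rho>" for \<pi>
  proof (cases "\<pi> permutes {1..m}")
    case True
    have top: "\<pi> (Suc m) = Suc m" using permutes_not_in[OF True] by simp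
    have "\<pi> permutes {1..Suc m}" using permutes_subset[OF True] by simp
    moreover have below: "\<pi> x \<le> m" if "x \<in> {1..m}" for x
      using permutes_in_image[OF True, of x] that by simp
    moreover have "(\<pi> \<circ> \<pi>) x \<le> m" if "x \<in> {1..m}" for x
      using permutes_in_image[OF True, of x] permutes_in_image[OF True, of "\<pi> x"] that by simp
    ultimately show ?thesis
      unfolding pattern_class_def avoids_pat_def using assms True top
        contains_pat_Suc_fixed_last[of \<pi> m, OF top below] contains_pat_Suc_fixed_last[of "\<pi> \<circ> \<pi>" m]
      by auto
  next
    case False
    have "\<not> \<pi> permutes {1..Suc m}" if "\<pi> (Suc m) = Suc m"
    proof
      assume "\<pi> permutes {1..Suc m}"
      moreover have "\<forall>x \<in> {1..Suc m} - {1..m}. \<pi> x = x" using that by (auto simp: le_Suc_eq)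
      ultimately show False using False permutes_superset by blast
    qed
    then show ?thesis using False unfolding pattern_class_def by auto
  qed
  then show ?thesis by blast
qed

abbreviation class_231_1243 :: "nat \<Rightarrow> (nat \<Rightarrow> nat) set" where
  "class_231_1243 n \<equiv> pattern_class n [2, 3, 1] [1, 2, 4, 3] [2, 3, 1]"

lemma class_231_1243_Suc:
  "class_231_1243 (Suc m)
     = class_231_1243 m \<union> (\<lambda>(p, q). block_perm (Suc m) p q) ` block_params (Suc m)"
proof -
  let ?C = "class_231_1243 (Suc m)"
  let ?B = "(\<lambda>(p, q). block_perm (Suc m) p q) ` block_params (Suc m)"
  have "{\<pi> \<in> ?C. \<pi> (Suc m) = Suc m} = class_231_1243 m"
    by (rule pattern_class_Suc_fixed_last) simp
  moreover have "{\<pi> \<in> ?C. \<pi> (Suc m) \<noteq> Suc m} = ?B"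
  proof
    show "{\<pi> \<in> ?C. \<pi> (Suc m) \<noteq> Suc m} \<subseteq> ?B"
    proof clarify
      fix \<pi> assume "\<pi> \<in> ?C" "\<pi> (Suc m) \<noteq> Suc m"
      then interpret avoider_moving_last "Suc m" \<pi>
        by unfold_locales (simp_all add: pattern_class_def)
      show "\<pi> \<in> ?B" by (rule in_block_perm_image)
    qed
    show "?B \<subseteq> {\<pi> \<in> ?C. \<pi> (Suc m) \<noteq> Suc m}"
      using block_perm_permutes block_perm_avoids_231 block_perm_avoids_1243
        block_perm_square_avoids_231 block_perm_moves_last
      by (auto simp: pattern_class_def)
  qed
  ultimately show ?thesis by blast
qed

lemma card_class_231_1243_Suc:
  "card (class_231_1243 (Suc m)) = card (class_231_1243 m) + card (block_params (Suc m))"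
proof -
  have "class_231_1243 m \<inter> (\<lambda>(p, q). block_perm (Suc m) p q) ` block_params (Suc m) = {}"
    using block_perm_moves_last permutes_not_in by (fastforce simp: pattern_class_def)
  then show ?thesis
    unfolding class_231_1243_Suc
    by (simp add: card_Un_disjoint finite_pattern_class finite_block_params
        card_image[OF inj_on_block_perm])
qed

lemma pattern_class_0:
  assumes "\<sigma>1 \<noteq> []" "\<sigma>2 \<noteq> []" "\<rho> \<noteq> []"
  shows "pattern_class 0 \<sigma>1 \<sigma>2 \<rho> = {id}"
proof -
  have "\<not> contains_pat 0 \<pi> \<tau>" if "\<tau> \<noteq> []" for \<pi> \<tau>
    using that unfolding contains_pat_def by auto
  then show ?thesis using assms unfolding pattern_class_def avoids_pat_def by auto
qed

lemma block_params_Suc: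
  "block_params (Suc n)
     = (\<lambda>(p, q). (Suc p, Suc q)) ` block_params n \<union> {1} \<times> {(n + 4) div 2 .. Suc n}"
proof
  show "block_params (Suc n)
      \<subseteq> (\<lambda>(p, q). (Suc p, Suc q)) ` block_params n \<union> {1} \<times> {(n + 4) div 2 .. Suc n}"
  proof
    fix x assume x: "x \<in> block_params (Suc n)"
    obtain p q where pq: "x = (p, q)" by (cases x)
    show "x \<in> (\<lambda>(p, q). (Suc p, Suc q)) ` block_params n \<union> {1} \<times> {(n + 4) div 2 .. Suc n}"
    proof (cases "p = 1")
      case False
      then have "(p - 1, q - 1) \<in> block_params n" "x = (Suc (p - 1), Suc (q - 1))"
        using x pq unfolding block_params_def by auto
      then show ?thesis by force
    qed (use x pq in \<open>auto simp: block_params_def\<close>)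
  qed
qed (auto simp: block_params_def)

lemma card_block_params_Suc: "card (block_params (Suc n)) = card (block_params n) + Suc n div 2"
proof -
  have "inj_on (\<lambda>(p, q). (Suc p, Suc q)) (block_params n)" by (auto simp: inj_on_def)
  moreover have "(\<lambda>(p, q). (Suc p, Suc q)) ` block_params n \<inter> {1} \<times> {(n + 4) div 2 .. Suc n} = {}"
    by (auto simp: block_params_def)
  ultimately show ?thesis
    unfolding block_params_Suc
    by (simp add: card_Un_disjoint finite_block_params card_image card_cartesian_product)
qed

lemma card_block_params:
  "card (block_params (2 * k)) = k * k \<and> card (block_params (2 * k + 1)) = k * k + k"
proof (induction k)
  case 0
  have "block_params 0 = {}" by (auto simp: block_params_def)
  then show ?case using card_block_params_Suc[of 0] by simp
next
  case (Suc k)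
  then show ?case
    using card_block_params_Suc[of "2 * k + 1"] card_block_params_Suc[of "2 * k + 2"] by simp
qed

lemma card_class_231_1243:
  "real (card (class_231_1243 (2 * k)))
     = (4 * real k ^ 3 + 3 * real k ^ 2 - real k) / 6 + 1 \<and>
   real (card (class_231_1243 (2 * k + 1)))
     = (4 * real k ^ 3 + 9 * real k ^ 2 + 5 * real k) / 6 + 1"
proof (induction k)
  case 0
  show ?case
    using card_class_231_1243_Suc[of 0] card_block_params[of 0] by (simp add: pattern_class_0)
next
  case (Suc k)
  have "card (class_231_1243 (2 * Suc k))
      = card (class_231_1243 (2 * k + 1)) + (k + 1) * (k + 1)"
    using card_class_231_1243_Suc[of "2 * k + 1"] card_block_params[of "Suc k"] by simp
  moreover have "card (class_231_1243 (2 * Suc k + 1))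
      = card (class_231_1243 (2 * Suc k)) + (k + 1) * (k + 1) + (k + 1)"
    using card_class_231_1243_Suc[of "2 * Suc k"] card_block_params[of "Suc k"] by simp
  ultimately show ?case
    using Suc.IH by (simp add: field_simps power2_eq_square power3_eq_cube)
qed

theorem theorem4p3:
  fixes n k :: nat
  assumes "n \<ge> 1"
  shows "c_count n [2,3,1] [1,2,4,3] [2,3,1] = c_count n [3,1,2] [2,1,3,4] [3,1,2]
    \<and> (n = 2*k \<longrightarrow> real (c_count n [2,3,1] [1,2,4,3] [2,3,1])
            = (4 * real k ^ 3 + 3 * real k ^ 2 - real k) / 6 + 1)
    \<and> (n = 2*k + 1 \<longrightarrow> real (c_count n [2,3,1] [1,2,4,3] [2,3,1])
            = (4 * real k ^ 3 + 9 * real k ^ 2 + 5 * real k) / 6 + 1)"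
proof -
  have "c_count n [3, 1, 2] [2, 1, 3, 4] [3, 1, 2]
      = c_count n (reverse_complement [2, 3, 1]) (reverse_complement [1, 2, 4, 3])
          (reverse_complement [2, 3, 1])"
    by (simp add: reverse_complement_def eval_nat_numeral)
  also have "\<dots> = c_count n [2, 3, 1] [1, 2, 4, 3] [2, 3, 1]"
    by (rule c_count_reverse_complement) auto
  finally show ?thesis
    using card_class_231_1243[of k] by (simp add: c_count_eq_card)
qed

end
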